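(* Let $(Q,\mathcal D,L)$ be a $G$-Chaplygin system whose shape space $S=Q/G$ has dimension $r\ge 2$, and let $H$, $C_{ij}^k$, $\nu$ be as in the context. Suppose that: (1) the reduced equations of motion preserve the measure $\mu=\exp(\sigma(s))\,\nu$ for some $\sigma\in C^\infty(S)$; (2) the gyroscopic coefficients satisfy hypothesis (H) everywhere on $S$. Then, after the time and momentum reparametrisation $$dt=\exp\Big(\tfrac{\sigma(s)}{1-r}\Big)\,d\tau,\qquad p_i=\exp\Big(\tfrac{\sigma(s)}{1-r}\Big)\,\tilde p_i,\quad i=1,\dots,r,$$ the reduced equations of motion take the Hamiltonian form $$\frac{ds^i}{d\tau}=\frac{\partial\tilde H}{\partial\tilde p_i},\qquad \frac{d\tilde p_i}{d\tau}=-\frac{\partial\tilde H}{\partial s^i},\qquad i=1,\dots,r,$$ where $\tilde H(s,\tilde p)=H\big(s,\exp\big(\tfrac{\sigma(s)}{1-r}\big)\tilde p\big)$.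
   Context: A nonholonomic system is a triple $(Q,\mathcal D,L)$ with $Q$ an $n$-dimensional manifold, $\mathcal D\subset TQ$ a rank-$r$ non-integrable distribution, and $L=K-U$ where $K(v)=\tfrac12\langle v,v\rangle$ for a Riemannian metric $\langle\cdot,\cdot\rangle$ on $Q$ and $U:Q\to\mathbb R$. It is a $G$-Chaplygin system if a Lie group $G$ (Lie algebra $\mathfrak g$) acts freely and properly on $Q$ such that: (i) $G$ acts by isometries and $U$ is $G$-invariant; (ii) $T_q\Phi_g(\mathcal D_q)=\mathcal D_{\Phi_g(q)}$ for all $g\in G$; (iii) $T_qQ=\mathcal D_q\oplus(\mathfrak g\cdot q)$ for all $q\in Q$. The shape space is $S=Q/G$ (dimension $r$), with projection $\pi:Q\to S$. For $v\in T_{\pi(q)}S$, the horizontal lift $\mathrm{hor}_q(v)$ is the unique vector in $\mathcal D_q$ with $T_q\pi(\mathrm{hor}_q(v))=v$. In local coordinates $(s^1,\dots,s^r)$ on $S$, put $K_{ij}(s)=\langle\mathrm{hor}_q(\partial_{s^i}),\mathrm{hor}_q(\partial_{s^j})\rangle_q$ ($q\in\pi^{-1}(s)$), with inverse matrix $K^{ij}$; $U$ also denotes the induced function on $S$. The reduced Hamiltonian on $T^*S$ (canonical coordinates $(s,p)$) is $H(s,p)=\tfrac12\sum_{i,j}K^{ij}(s)p_ip_j+U(s)$. The gyroscopic coefficients are $C_{ij}^k(s)=\sum_{l}K^{kl}(s)\langle[\mathrm{hor}_q(\partial_{s^i}),\mathrm{hor}_q(\partial_{s^j})],\mathrm{hor}_q(\partial_{s^l})\rangle_q$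 ($[\cdot,\cdot]$ the Lie bracket of vector fields on $Q$; independent of $q\in\pi^{-1}(s)$); they satisfy $C_{ij}^k=-C_{ji}^k$ and are the components of a $(1,2)$ tensor field $\mathcal T=\sum C_{ij}^k\,ds^i\otimes ds^j\otimes\partial_{s^k}$ on $S$. The reduced equations of motion on $T^*S$ are $\frac{ds^i}{dt}=\frac{\partial H}{\partial p_i}$, $\frac{dp_i}{dt}=-\frac{\partial H}{\partial s^i}-\sum_{j,k}C_{ij}^kp_k\frac{\partial H}{\partial p_j}$, $i=1,\dots,r$. The Liouville volume on $T^*S$ is $\nu=ds^1\cdots ds^r\,dp_1\cdots dp_r$. Hypothesis (H): $C_{ij}^k=0$ whenever $i,j,k$ are pairwise distinct, and $C_{ij}^j=C_{ik}^k$ for all $j,k\neq i$. *)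

theory Defs
  imports "HOL-Analysis.Analysis"
begin

text \<open>Local coordinate rendering of the reduced Chaplygin dynamics on a chart
  domain of the shape space S (an open set of coordinates s in R^r; the index
  type 'r has r elements).  Points of T*S over the chart are pairs (s,p).\<close>

definition pd :: "(real^'r \<Rightarrow> real) \<Rightarrow> real^'r \<Rightarrow> 'r \<Rightarrow> real" where
  "pd f x i = deriv (\<lambda>h. f (x + h *\<^sub>R axis i 1)) 0"

fun dpart :: "'r list \<Rightarrow> (real^'r \<Rightarrow> real) \<Rightarrow> real^'r \<Rightarrow> real" where
  "dpart [] f = f"
| "dpart (i # is) f = (\<lambda>x. pd (dpart is f) x i)"

definition smooth_on :: "(real^'r) set \<Rightarrow> (real^'r \<Rightarrow> real) \<Rightarrow> bool" where
  "smooth_on \<Omega> f \<longleftrightarrow> (\<forall>is. \<forall>x\<in>\<Omega>. dpart is f differentiable (at x))"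

definition redH :: "(real^'r \<Rightarrow> real^'r^'r) \<Rightarrow> (real^'r \<Rightarrow> real)
    \<Rightarrow> real^'r \<Rightarrow> real^'r \<Rightarrow> real" where
  "redH K U s p = (1/2) * (\<Sum>i\<in>UNIV. \<Sum>j\<in>UNIV. matrix_inv (K s) $ i $ j * p $ i * p $ j) + U s"

definition dHds :: "(real^'r \<Rightarrow> real^'r \<Rightarrow> real) \<Rightarrow> real^'r \<Rightarrow> real^'r \<Rightarrow> 'r \<Rightarrow> real" where
  "dHds F s p i = pd (\<lambda>s'. F s' p) s i"

definition dHdp :: "(real^'r \<Rightarrow> real^'r \<Rightarrow> real) \<Rightarrow> real^'r \<Rightarrow> real^'r \<Rightarrow> 'r \<Rightarrow> real" where
  "dHdp F s p i = pd (\<lambda>p'. F s p') p i"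

text \<open>Components of the reduced vector field on T*S; C s i j k = C_{ij}^k(s).\<close>
definition redXs :: "(real^'r \<Rightarrow> real^'r \<Rightarrow> real) \<Rightarrow> real^'r \<Rightarrow> real^'r \<Rightarrow> real^'r" where
  "redXs F s p = (\<chi> i. dHdp F s p i)"

definition redXp :: "(real^'r \<Rightarrow> real^'r \<Rightarrow> real) \<Rightarrow> (real^'r \<Rightarrow> 'r \<Rightarrow> 'r \<Rightarrow> 'r \<Rightarrow> real)
    \<Rightarrow> real^'r \<Rightarrow> real^'r \<Rightarrow> real^'r" where
  "redXp F C s p = (\<chi> i. - dHds F s p i
       - (\<Sum>j\<in>UNIV. \<Sum>k\<in>UNIV. C s i j k * p $ k * dHdp F s p j))"

text \<open>Invariance of the smooth measure exp(sigma) ds dp under the flow of the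
  reduced equations (Liouville): div(exp(sigma) X) = 0 on T*S over the chart.\<close>
definition preserves_measure :: "(real^'r) set \<Rightarrow> (real^'r \<Rightarrow> real^'r \<Rightarrow> real)
    \<Rightarrow> (real^'r \<Rightarrow> 'r \<Rightarrow> 'r \<Rightarrow> 'r \<Rightarrow> real) \<Rightarrow> (real^'r \<Rightarrow> real) \<Rightarrow> bool" where
  "preserves_measure \<Omega> F C \<sigma> \<longleftrightarrow>
     (\<forall>s\<in>\<Omega>. \<forall>p.
        (\<Sum>i\<in>UNIV. pd (\<lambda>s'. exp (\<sigma> s') * redXs F s' p $ i) s i)
      + (\<Sum>i\<in>UNIV. pd (\<lambda>p'. exp (\<sigma> s) * redXp F C s p' $ i) p i) = 0)"

definition hypH :: "(real^'r) set \<Rightarrow> (real^'r \<Rightarrow> 'r \<Rightarrow> 'r \<Rightarrow> 'r \<Rightarrow> real) \<Rightarrow> bool" where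
  "hypH \<Omega> C \<longleftrightarrow> (\<forall>s\<in>\<Omega>.
     (\<forall>i j k. i \<noteq> j \<and> j \<noteq> k \<and> i \<noteq> k \<longrightarrow> C s i j k = 0) \<and>
     (\<forall>i j k. j \<noteq> i \<and> k \<noteq> i \<longrightarrow> C s i j j = C s i k k))"

end

theory Submission
  imports Defs
begin

text \<open>
  Invariance of exp(sigma) ds dp means that exp(sigma) X is divergence free. In this divergence
  the mixed second derivatives of H cancel, and in the momentum divergence of the gyroscopic
  force the terms containing the Hessian of H in p vanish by the antisymmetry of C. What is left
  is sum_j (d sigma/d s^j - sum_i C_ij^i) v^j = 0 for v = K^-1 p; as p is arbitrary,
  d sigma/d s^j = sum_i C_ij^i. Under (H) the coefficients C_jm^m with m /= j have a common
  value c_j and sum_i C_ij^i = (1 - r) c_j, so c is the gradient of log N for the multiplier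
  N = exp(sigma/(1-r)), and the gyroscopic force reduces to c_i (p.v) - p_i (c.v). After the
  substitution dt = N dtau, p = N p~, the term p_i (c.v) is cancelled by the derivative of 1/N
  along the motion, while c_i (p.v) is exactly the additional s-derivative of H(s, N(s) p~).
\<close>

section \<open>Partial derivatives\<close>

lemma sum_axis_mult_right [simp]: "(\<Sum>j\<in>UNIV. f j * axis i (1::real) $ j) = f i"
  by (simp add: axis_def if_distrib cong: if_cong)

lemma sum_axis_mult_left [simp]: "(\<Sum>j\<in>UNIV. axis i (1::real) $ j * f j) = f i"
  using sum_axis_mult_right[of f i] by (simp add: mult.commute)

lemma has_derivative_vec_nth [derivative_intros]:
  "((\<lambda>x. x $ j) has_derivative (\<lambda>x. x $ j)) F"
  by (rule bounded_linear_imp_has_derivative) (rule bounded_linear_vec_nth)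

lemma axis_nth_mult:
  "axis i (1::real) $ j * a = (if j = i then a else 0)"
  "a * axis i (1::real) $ j = (if j = i then a else 0)"
  by (simp_all add: axis_def)

lemma sum_if_zero: "(\<Sum>x\<in>A. if P then f x else 0) = (if P then sum f A else 0)"
  by simp

lemma pd_eqI:
  fixes f :: "real^'n \<Rightarrow> real"
  assumes f: "(f has_derivative D) (at x)" and D: "D (axis i 1) = d"
  shows "pd f x i = d"
proof -
  have "((\<lambda>h. f (x + h *\<^sub>R axis i 1)) has_derivative (\<lambda>h. D (h *\<^sub>R axis i 1))) (at 0)"
    by (rule has_derivative_compose[of _ _ _ _ f]) (auto intro!: derivative_eq_intros f)
  then have "((\<lambda>h. f (x + h *\<^sub>R axis i 1)) has_real_derivative d) (at 0)"
    by (rule has_derivative_imp_has_field_derivative)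
       (simp add: linear_scale[OF has_derivative_linear[OF f]] D)
  then show ?thesis unfolding pd_def by (rule DERIV_imp_deriv)
qed

lemma has_derivative_pd:
  fixes f :: "real^'n \<Rightarrow> real"
  assumes "f differentiable (at x)"
  shows "(f has_derivative (\<lambda>v. \<Sum>i\<in>UNIV. v $ i * pd f x i)) (at x)"
proof -
  obtain D where D: "(f has_derivative D) (at x)"
    using assms differentiable_def by blast
  have "D v = (\<Sum>i\<in>UNIV. v $ i * pd f x i)" for v
  proof -
    have "D v = D (\<Sum>i\<in>UNIV. v $ i *\<^sub>R axis i 1)"
      by (metis basis_expansion scalar_mult_eq_scaleR)
    also have "\<dots> = (\<Sum>i\<in>UNIV. v $ i * D (axis i 1))"
      using has_derivative_linear[OF D] by (simp add: linear_sum linear_scale)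
    finally show ?thesis by (simp add: pd_eqI[OF D])
  qed
  with D show ?thesis by (metis (no_types, lifting) ext)
qed

lemma pd_cong_open:
  fixes f g :: "real^'n \<Rightarrow> real"
  assumes "open S" "x \<in> S" "\<And>y. y \<in> S \<Longrightarrow> f y = g y"
  shows "pd f x i = pd g x i"
proof -
  have "((\<lambda>h. x + h *\<^sub>R axis i 1) \<longlongrightarrow> x) (at (0::real))"
    by (intro tendsto_eq_intros) auto
  then have "\<forall>\<^sub>F h in at 0. x + h *\<^sub>R axis i 1 \<in> S"
    by (rule eventually_compose_filterlim[OF eventually_nhds_in_open[OF assms(1,2)]])
  then have "\<forall>\<^sub>F h in nhds 0. x + h *\<^sub>R axis i 1 \<in> S"
    using assms(2) by (simp add: eventually_nhds_conv_at)
  then have "\<forall>\<^sub>F h in nhds 0. f (x + h *\<^sub>R axis i 1) = g (x + h *\<^sub>R axis i 1)"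
    by eventually_elim (rule assms(3))
  then show ?thesis unfolding pd_def by (rule deriv_cong_ev) simp
qed

lemma smooth_on_imp_differentiable:
  "smooth_on \<Omega> f \<Longrightarrow> x \<in> \<Omega> \<Longrightarrow> f differentiable (at x)"
  unfolding smooth_on_def by (metis dpart.simps(1))

section \<open>The inverse of the kinetic energy matrix\<close>

lemma differentiable_prod:
  fixes f :: "'i \<Rightarrow> 'a::real_normed_vector \<Rightarrow> 'b::real_normed_field"
  assumes "\<And>i. i \<in> I \<Longrightarrow> f i differentiable (at x)"
  shows "(\<lambda>x. \<Prod>i\<in>I. f i x) differentiable (at x)"
proof -
  obtain D where "\<And>i. i \<in> I \<Longrightarrow> (f i has_derivative D i) (at x)"
    using assms unfolding differentiable_def by metis
  then show ?thesis unfolding differentiable_def by (blast intro: has_derivative_prod)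
qed

lemma differentiable_det:
  fixes F :: "'a::real_normed_vector \<Rightarrow> real^'n^'n"
  assumes "\<And>i j. (\<lambda>y. F y $ i $ j) differentiable (at x)"
  shows "(\<lambda>y. det (F y)) differentiable (at x)"
  unfolding det_def
  by (intro differentiable_sum ballI differentiable_mult differentiable_const differentiable_prod assms)
     auto

lemma invertible_if_pos_def:
  fixes A :: "real^'n^'n"
  assumes "\<And>v. v \<noteq> 0 \<Longrightarrow> v \<bullet> (A *v v) > 0"
  shows "invertible A"
  unfolding invertible_left_inverse matrix_left_invertible_ker
  using assms by (metis inner_zero_right less_irrefl)

lemma matrix_inv_inverse:
  fixes A :: "'a::semiring_1^'n^'n"
  assumes "invertible A"
  shows matrix_inv_right: "A ** matrix_inv A = mat 1"
    and matrix_inv_left: "matrix_inv A ** A = mat 1"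
  using someI_ex[OF assms[unfolded invertible_def]] unfolding matrix_inv_def by auto

lemma symmetric_matrix_inv:
  fixes A :: "'a::comm_semiring_1^'n^'n"
  assumes "invertible A" "transpose A = A"
  shows "transpose (matrix_inv A) = matrix_inv A"
proof -
  have "transpose (matrix_inv A) ** A = mat 1"
    by (metis assms matrix_inv_right matrix_transpose_mul transpose_mat)
  then show ?thesis
    by (metis assms(1) matrix_inv_right matrix_mul_assoc matrix_mul_lid matrix_mul_rid)
qed

lemma symmetric_entries: "transpose A = A \<Longrightarrow> A $ j $ k = A $ k $ j"
  by (metis transpose_def vec_lambda_beta)

lemma matrix_inv_cramer:
  fixes A :: "real^'n^'n"
  assumes "invertible A"
  shows "matrix_inv A $ j $ k = det (\<chi> i l. if l = j then axis k 1 $ i else A $ i $ l) / det A"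
proof -
  have "A *v (matrix_inv A *v axis k 1) = axis k 1"
    by (simp add: matrix_vector_mul_assoc matrix_inv_right[OF assms])
  then have "matrix_inv A *v axis k 1 = (\<chi> j. det (\<chi> i l. if l = j then axis k 1 $ i else A $ i $ l) / det A)"
    using cramer invertible_det_nz assms by blast
  moreover have "(matrix_inv A *v axis k 1) $ j = matrix_inv A $ j $ k"
    by (simp add: matrix_vector_mult_def)
  ultimately show ?thesis by simp
qed

lemma differentiable_matrix_inv_entry:
  fixes F :: "'a::real_normed_vector \<Rightarrow> real^'n^'n"
  assumes "open S" "x \<in> S" "\<And>y. y \<in> S \<Longrightarrow> invertible (F y)"
    and "\<And>i j. (\<lambda>y. F y $ i $ j) differentiable (at x)"
  shows "(\<lambda>y. matrix_inv (F y) $ j $ k) differentiable (at x)"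
proof -
  let ?cramer = "\<lambda>y. det (\<chi> i l. if l = j then axis k 1 $ i else F y $ i $ l) / det (F y)"
  have "(\<lambda>y. (\<chi> i l. if l = j then axis k 1 $ i else F y $ i $ l) $ a $ b) differentiable (at x)"
    for a b by (cases "b = j") (simp_all add: assms(4))
  moreover have "det (F x) \<noteq> 0"
    using assms(2,3) invertible_det_nz by blast
  ultimately have "?cramer differentiable (at x)"
    by (intro differentiable_divide differentiable_det assms(4))
  then obtain D where "(?cramer has_derivative D) (at x)"
    unfolding differentiable_def by blast
  then have "((\<lambda>y. matrix_inv (F y) $ j $ k) has_derivative D) (at x)"
    by (rule has_derivative_transform_within_open[OF _ assms(1,2)])
       (simp add: matrix_inv_cramer assms(3))
  then show ?thesis unfolding differentiable_def by blast
qed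

section \<open>Derivatives of the reduced Hamiltonian\<close>

lemma quadratic_form_eq_inner:
  fixes A :: "real^'n^'n"
  shows "(\<Sum>j\<in>UNIV. \<Sum>k\<in>UNIV. A $ j $ k * p $ j * p $ k) = p \<bullet> (A *v p)"
  by (simp add: inner_vec_def matrix_vector_mult_def sum_distrib_left mult_ac)

lemma pd_redH_scaled_momentum:
  fixes K :: "real^'r \<Rightarrow> real^'r^'r"
  assumes inv_sym: "transpose (matrix_inv (K x)) = matrix_inv (K x)"
  shows "pd (\<lambda>q. redH K U x (c *\<^sub>R q)) q i = c\<^sup>2 * (matrix_inv (K x) *v q) $ i"
proof -
  let ?A = "matrix_inv (K x)"
  have "pd (\<lambda>q. redH K U x (c *\<^sub>R q)) q i
      = c\<^sup>2 / 2 * ((\<Sum>j\<in>UNIV. ?A $ j $ i * q $ j) + (\<Sum>k\<in>UNIV. ?A $ i $ k * q $ k))"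
    unfolding redH_def vector_scaleR_component
    by (rule pd_eqI, (rule has_derivative_const has_derivative_vec_nth derivative_intros)+)
       (simp add: axis_nth_mult mult_delta_left mult_delta_right sum_if_zero sum.distrib cong: if_cong,
        simp add: sum_distrib_left algebra_simps power2_eq_square)
  also have "(\<Sum>j\<in>UNIV. ?A $ j $ i * q $ j) = (?A *v q) $ i"
    using inv_sym by (metis (no_types, lifting) matrix_vector_mult_def sum.cong transpose_def vec_lambda_beta)
  finally show ?thesis by (simp add: matrix_vector_mult_def)
qed

lemma dHdp_redH:
  fixes K :: "real^'r \<Rightarrow> real^'r^'r"
  assumes "transpose (matrix_inv (K x)) = matrix_inv (K x)"
  shows "dHdp (redH K U) x q i = (matrix_inv (K x) *v q) $ i"
  using pd_redH_scaled_momentum[of K x U 1 q i, OF assms] by (simp add: dHdp_def)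

lemma dHds_redH:
  fixes K :: "real^'r \<Rightarrow> real^'r^'r"
  assumes "\<And>j k. (\<lambda>y. matrix_inv (K y) $ j $ k) differentiable (at x)"
    and "U differentiable (at x)"
  shows "dHds (redH K U) x p i
    = (\<Sum>j\<in>UNIV. \<Sum>k\<in>UNIV. pd (\<lambda>y. matrix_inv (K y) $ j $ k) x i * p $ j * p $ k) / 2 + pd U x i"
  unfolding dHds_def redH_def
  by (rule pd_eqI, (rule has_derivative_pd[OF assms(1)] has_derivative_pd[OF assms(2)]
      has_derivative_const derivative_intros)+)
     (simp add: sum_distrib_left sum_divide_distrib mult_ac)

lemma pd_redH_scaled_position:
  fixes K :: "real^'r \<Rightarrow> real^'r^'r"
  assumes "\<And>j k. (\<lambda>y. matrix_inv (K y) $ j $ k) differentiable (at x)"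
    and "U differentiable (at x)" and "e differentiable (at x)"
  shows "pd (\<lambda>y. redH K U y (e y *\<^sub>R P)) x i
    = dHds (redH K U) x (e x *\<^sub>R P) i + e x * pd e x i * (P \<bullet> (matrix_inv (K x) *v P))"
  unfolding dHds_redH[OF assms(1,2)] redH_def vector_scaleR_component real_scaleR_def
    quadratic_form_eq_inner[symmetric]
  by (rule pd_eqI, (rule has_derivative_pd[OF assms(1)] has_derivative_pd[OF assms(2)]
      has_derivative_pd[OF assms(3)] has_derivative_const derivative_intros)+)
     (simp add: sum_distrib_left sum_distrib_right sum_divide_distrib flip: sum.distrib,
      intro sum.cong refl, simp add: field_simps power2_eq_square)

lemma dHdp_redH_rescaled:
  fixes K :: "real^'r \<Rightarrow> real^'r^'r"
  assumes "transpose (matrix_inv (K x)) = matrix_inv (K x)" and "e x \<noteq> 0"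
  shows "dHdp (\<lambda>y q. redH K U y (e y *\<^sub>R q)) x ((1 / e x) *\<^sub>R p) i
    = e x * (matrix_inv (K x) *v p) $ i"
  using pd_redH_scaled_momentum[of K x U "e x" "(1 / e x) *\<^sub>R p" i, OF assms(1)] assms(2)
  by (simp add: dHdp_def matrix_vector_mult_scaleR power2_eq_square)

lemma dHds_redH_rescaled:
  fixes K :: "real^'r \<Rightarrow> real^'r^'r"
  assumes "\<And>j k. (\<lambda>y. matrix_inv (K y) $ j $ k) differentiable (at x)"
    and "U differentiable (at x)" and "e differentiable (at x)" and "e x \<noteq> 0"
  shows "dHds (\<lambda>y q. redH K U y (e y *\<^sub>R q)) x ((1 / e x) *\<^sub>R p) i
    = dHds (redH K U) x p i + pd e x i / e x * (p \<bullet> (matrix_inv (K x) *v p))"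
  using pd_redH_scaled_position[OF assms(1-3), of "(1 / e x) *\<^sub>R p" i] assms(4)
  by (simp add: dHds_def matrix_vector_mult_scaleR power2_eq_square)

section \<open>The invariant measure and hypothesis (H)\<close>

lemma sum_antisymmetric_eq_zero:
  fixes f :: "'a \<Rightarrow> 'a \<Rightarrow> real"
  assumes "\<And>i j. f i j = - f j i"
  shows "(\<Sum>i\<in>A. \<Sum>j\<in>A. f i j) = 0"
proof -
  have "(\<Sum>i\<in>A. \<Sum>j\<in>A. f i j) = (\<Sum>j\<in>A. \<Sum>i\<in>A. - f j i)"
    by (subst sum.swap) (intro sum.cong refl assms)
  also have "\<dots> = - (\<Sum>j\<in>A. \<Sum>i\<in>A. f j i)"
    by (simp add: sum_negf)
  finally show ?thesis by simp
qed

lemma pd_exp_mult_redXs: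
  fixes K :: "real^'r \<Rightarrow> real^'r^'r"
  assumes "open \<Omega>" "x \<in> \<Omega>"
    and inv_sym: "\<And>y. y \<in> \<Omega> \<Longrightarrow> transpose (matrix_inv (K y)) = matrix_inv (K y)"
    and da: "\<And>j k. (\<lambda>y. matrix_inv (K y) $ j $ k) differentiable (at x)"
    and d\<sigma>: "\<sigma> differentiable (at x)"
  shows "pd (\<lambda>y. exp (\<sigma> y) * redXs (redH K U) y p $ i) x i
    = exp (\<sigma> x) * (pd \<sigma> x i * (matrix_inv (K x) *v p) $ i
        + (\<Sum>k\<in>UNIV. pd (\<lambda>y. matrix_inv (K y) $ i $ k) x i * p $ k))"
proof -
  have "pd (\<lambda>y. exp (\<sigma> y) * redXs (redH K U) y p $ i) x i
      = pd (\<lambda>y. exp (\<sigma> y) * (\<Sum>k\<in>UNIV. matrix_inv (K y) $ i $ k * p $ k)) x i"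
    using assms(1,2) by (rule pd_cong_open) (simp add: redXs_def dHdp_redH inv_sym matrix_vector_mult_def)
  also have "\<dots> = exp (\<sigma> x) * (pd \<sigma> x i * (matrix_inv (K x) *v p) $ i
        + (\<Sum>k\<in>UNIV. pd (\<lambda>y. matrix_inv (K y) $ i $ k) x i * p $ k))"
    by (rule pd_eqI, (rule has_derivative_pd[OF da] has_derivative_pd[OF d\<sigma>]
        has_derivative_const derivative_intros)+)
       (simp add: matrix_vector_mult_def algebra_simps sum_distrib_left)
  finally show ?thesis .
qed

lemma pd_mult_redXp:
  fixes K :: "real^'r \<Rightarrow> real^'r^'r"
  assumes "open \<Omega>" "x \<in> \<Omega>"
    and inv_sym: "\<And>y. y \<in> \<Omega> \<Longrightarrow> transpose (matrix_inv (K y)) = matrix_inv (K y)"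
    and da: "\<And>j k. (\<lambda>y. matrix_inv (K y) $ j $ k) differentiable (at x)"
    and dU: "U differentiable (at x)"
  shows "pd (\<lambda>q. E * redXp (redH K U) C x q $ i) p i
    = E * (- (\<Sum>k\<in>UNIV. pd (\<lambda>y. matrix_inv (K y) $ i $ k) x i * p $ k)
        - (\<Sum>j\<in>UNIV. C x i j i * (matrix_inv (K x) *v p) $ j)
        - (\<Sum>j\<in>UNIV. \<Sum>k\<in>UNIV. C x i j k * p $ k * matrix_inv (K x) $ j $ i))"
proof -
  let ?a = "\<lambda>j k. matrix_inv (K x) $ j $ k" and ?da = "\<lambda>j k. pd (\<lambda>y. matrix_inv (K y) $ j $ k) x i"
  \<comment> \<open>K^-1 is symmetric on all of the open set, hence so are its partial derivatives\<close>
  have da_sym: "?da k i = ?da i k" for k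
    using assms(1,2) by (rule pd_cong_open) (simp add: symmetric_entries[OF inv_sym])
  have "pd (\<lambda>q. E * redXp (redH K U) C x q $ i) p i
      = pd (\<lambda>q. E * (- (1 / 2 * (\<Sum>j\<in>UNIV. \<Sum>k\<in>UNIV. ?da j k * q $ j * q $ k) + pd U x i)
          - (\<Sum>j\<in>UNIV. \<Sum>k\<in>UNIV. C x i j k * q $ k * (\<Sum>l\<in>UNIV. ?a j l * q $ l)))) p i"
    by (simp add: redXp_def dHds_redH[OF da dU] matrix_vector_mult_def
        dHdp_redH[where K=K and x=x, OF inv_sym[OF assms(2)]])
  also have "\<dots> = E * (- (\<Sum>k\<in>UNIV. (?da i k + ?da k i) / 2 * p $ k)
        - (\<Sum>j\<in>UNIV. C x i j i * (\<Sum>l\<in>UNIV. ?a j l * p $ l))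
        - (\<Sum>j\<in>UNIV. \<Sum>k\<in>UNIV. C x i j k * p $ k * ?a j i))"
    by (rule pd_eqI, (rule has_derivative_const has_derivative_vec_nth derivative_intros)+)
       (simp add: axis_nth_mult mult_delta_left mult_delta_right sum_if_zero sum.distrib cong: if_cong,
        simp add: sum_distrib_right distrib_right sum.distrib add_divide_distrib)
  also have "(\<Sum>k\<in>UNIV. (?da i k + ?da k i) / 2 * p $ k) = (\<Sum>k\<in>UNIV. ?da i k * p $ k)"
  proof (intro sum.cong refl)
    fix k
    show "(?da i k + ?da k i) / 2 * p $ k = ?da i k * p $ k"
      by (simp add: da_sym[of k])
  qed
  finally show ?thesis by (simp add: matrix_vector_mult_def)
qed

lemma preserves_measure_gradient:
  fixes K :: "real^'r \<Rightarrow> real^'r^'r" and C :: "real^'r \<Rightarrow> 'r \<Rightarrow> 'r \<Rightarrow> 'r \<Rightarrow> real"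
  assumes pm: "preserves_measure \<Omega> (redH K U) C \<sigma>" and \<Omega>: "open \<Omega>" "x \<in> \<Omega>"
    and inv_sym: "\<And>y. y \<in> \<Omega> \<Longrightarrow> transpose (matrix_inv (K y)) = matrix_inv (K y)"
    and inv: "invertible (K x)"
    and da: "\<And>j k. (\<lambda>y. matrix_inv (K y) $ j $ k) differentiable (at x)"
    and dU: "U differentiable (at x)" and d\<sigma>: "\<sigma> differentiable (at x)"
    and antisym: "\<And>i j k. C x i j k = - C x j i k"
  shows "pd \<sigma> x m = (\<Sum>i\<in>UNIV. C x i m i)"
proof -
  let ?A = "matrix_inv (K x)"
  have divergence: "(\<Sum>j\<in>UNIV. (pd \<sigma> x j - (\<Sum>i\<in>UNIV. C x i j i)) * (?A *v p) $ j) = 0" for p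
  proof -
    let ?T = "\<lambda>i j. \<Sum>k\<in>UNIV. C x i j k * p $ k * ?A $ j $ i"
    have "?T i j = - ?T j i" for i j
      using antisym[of i j] symmetric_entries[OF inv_sym[OF \<Omega>(2)], of j i] by (simp add: sum_negf)
    then have T_zero: "(\<Sum>i\<in>UNIV. \<Sum>j\<in>UNIV. ?T i j) = 0"
      by (rule sum_antisymmetric_eq_zero)
    have swap: "(\<Sum>i\<in>UNIV. \<Sum>j\<in>UNIV. C x i j i * (?A *v p) $ j)
        = (\<Sum>j\<in>UNIV. (\<Sum>i\<in>UNIV. C x i j i) * (?A *v p) $ j)"
      by (subst sum.swap) (simp add: sum_distrib_right)
    have "0 = (\<Sum>i\<in>UNIV. pd (\<lambda>y. exp (\<sigma> y) * redXs (redH K U) y p $ i) x i)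
        + (\<Sum>i\<in>UNIV. pd (\<lambda>q. exp (\<sigma> x) * redXp (redH K U) C x q $ i) p i)"
      using pm \<Omega>(2) unfolding preserves_measure_def by simp
    also have "\<dots> = (\<Sum>i\<in>UNIV. exp (\<sigma> x) * (pd \<sigma> x i * (?A *v p) $ i
        - (\<Sum>j\<in>UNIV. C x i j i * (?A *v p) $ j) - (\<Sum>j\<in>UNIV. ?T i j)))"
      unfolding sum.distrib[symmetric]
    proof (intro sum.cong refl)
      fix i
      show "pd (\<lambda>y. exp (\<sigma> y) * redXs (redH K U) y p $ i) x i
          + pd (\<lambda>q. exp (\<sigma> x) * redXp (redH K U) C x q $ i) p i
        = exp (\<sigma> x) * (pd \<sigma> x i * (?A *v p) $ i
          - (\<Sum>j\<in>UNIV. C x i j i * (?A *v p) $ j) - (\<Sum>j\<in>UNIV. ?T i j))"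
        by (simp add: pd_exp_mult_redXs[OF \<Omega> inv_sym da d\<sigma>] pd_mult_redXp[OF \<Omega> inv_sym da dU]
            algebra_simps)
    qed
    also have "\<dots> = exp (\<sigma> x) * ((\<Sum>i\<in>UNIV. pd \<sigma> x i * (?A *v p) $ i)
        - (\<Sum>i\<in>UNIV. \<Sum>j\<in>UNIV. C x i j i * (?A *v p) $ j) - (\<Sum>i\<in>UNIV. \<Sum>j\<in>UNIV. ?T i j))"
      by (simp only: sum_subtractf sum_distrib_left right_diff_distrib)
    also have "\<dots> = exp (\<sigma> x) * (\<Sum>j\<in>UNIV. (pd \<sigma> x j - (\<Sum>i\<in>UNIV. C x i j i)) * (?A *v p) $ j)"
      unfolding swap T_zero by (simp add: sum_subtractf left_diff_distrib)
    finally show ?thesis by simp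
  qed
  \<comment> \<open>p = K e_m turns v = K^-1 p into the m-th unit vector\<close>
  have "?A *v (K x *v axis m 1) = axis m 1"
    by (simp add: matrix_vector_mul_assoc matrix_inv_left[OF inv])
  then show ?thesis
    using divergence[of "K x *v axis m 1"] by simp
qed

lemma hypH_trace:
  fixes C :: "'r::finite \<Rightarrow> 'r \<Rightarrow> 'r \<Rightarrow> real"
  assumes antisym: "\<And>i j k. C i j k = - C j i k"
    and diag: "\<And>i j k. j \<noteq> i \<Longrightarrow> k \<noteq> i \<Longrightarrow> C i j j = C i k k"
    and "m \<noteq> j"
  shows "(\<Sum>i\<in>UNIV. C i j i) = (1 - real CARD('r)) * C j m m"
proof -
  have "(\<Sum>i\<in>UNIV. C i j i) = - (\<Sum>i\<in>UNIV. C j i i)"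
    by (simp add: antisym[of _ j] sum_negf)
  also have "(\<Sum>i\<in>UNIV. C j i i) = C j j j + (\<Sum>i\<in>UNIV - {j}. C j i i)"
    by (rule sum.remove) auto
  also have "(\<Sum>i\<in>UNIV - {j}. C j i i) = (\<Sum>i\<in>UNIV - {j}. C j m m)"
    using \<open>m \<noteq> j\<close> by (intro sum.cong refl diag) auto
  also have "C j j j = 0"
    using antisym[of j j j] by simp
  finally show ?thesis
    by (simp add: card_Diff_singleton of_nat_diff algebra_simps)
qed

lemma hypH_gyroscopic_term:
  fixes C :: "'r::finite \<Rightarrow> 'r \<Rightarrow> 'r \<Rightarrow> real"
  assumes antisym: "\<And>i j k. C i j k = - C j i k"
    and distinct: "\<And>i j k. i \<noteq> j \<Longrightarrow> j \<noteq> k \<Longrightarrow> i \<noteq> k \<Longrightarrow> C i j k = 0"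
    and diag: "\<And>j m. m \<noteq> j \<Longrightarrow> C j m m = c $ j"
  shows "(\<Sum>j\<in>UNIV. \<Sum>k\<in>UNIV. C i j k * p $ k * v $ j) = c $ i * (p \<bullet> v) - p $ i * (c \<bullet> v)"
proof -
  have row: "(\<Sum>k\<in>UNIV. C i j k * p $ k) = c $ i * p $ j - c $ j * p $ i" for j
  proof (cases "j = i")
    case True
    then show ?thesis using antisym[of i i] by simp
  next
    case False
    have "(\<Sum>k\<in>UNIV. C i j k * p $ k)
        = (\<Sum>k\<in>UNIV. (if k = i then C i j i * p $ i else 0) + (if k = j then C i j j * p $ j else 0))"
      by (rule sum.cong) (use False distinct in auto)
    also have "\<dots> = C i j i * p $ i + C i j j * p $ j"
      by (simp add: sum.distrib)
    finally show ?thesis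
      using antisym[of i j i] diag[of i j] diag[of j i] False by simp
  qed
  have "(\<Sum>j\<in>UNIV. \<Sum>k\<in>UNIV. C i j k * p $ k * v $ j)
      = (\<Sum>j\<in>UNIV. (\<Sum>k\<in>UNIV. C i j k * p $ k) * v $ j)"
    by (simp add: sum_distrib_right)
  also have "\<dots> = (\<Sum>j\<in>UNIV. c $ i * (p $ j * v $ j) - p $ i * (c $ j * v $ j))"
    unfolding row by (simp add: algebra_simps)
  also have "\<dots> = c $ i * (\<Sum>j\<in>UNIV. p $ j * v $ j) - p $ i * (\<Sum>j\<in>UNIV. c $ j * v $ j)"
    by (simp only: sum_subtractf sum_distrib_left)
  finally show ?thesis
    by (simp add: inner_vec_def)
qed

lemma redXp_redH_gyroscopic:
  fixes K :: "real^'r \<Rightarrow> real^'r^'r" and C :: "real^'r \<Rightarrow> 'r \<Rightarrow> 'r \<Rightarrow> 'r \<Rightarrow> real"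
  assumes inv_sym: "transpose (matrix_inv (K x)) = matrix_inv (K x)"
    and antisym: "\<And>i j k. C x i j k = - C x j i k"
    and distinct: "\<And>i j k. i \<noteq> j \<Longrightarrow> j \<noteq> k \<Longrightarrow> i \<noteq> k \<Longrightarrow> C x i j k = 0"
    and diag: "\<And>j m. m \<noteq> j \<Longrightarrow> C x j m m = c $ j"
  shows "redXp (redH K U) C x p = (\<chi> i. - dHds (redH K U) x p i
    - (c $ i * (p \<bullet> (matrix_inv (K x) *v p)) - p $ i * (c \<bullet> (matrix_inv (K x) *v p))))"
  by (simp add: redXp_def dHdp_redH[where K=K and x=x, OF inv_sym]
      hypH_gyroscopic_term[of "C x", OF antisym distinct diag])

section \<open>Reparametrisation of time and momenta\<close>

lemma exp_scaled_derivative: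
  fixes \<sigma> :: "real^'n \<Rightarrow> real"
  assumes "\<sigma> differentiable (at x)" and "a \<noteq> 0"
  shows "(\<lambda>y. exp (\<sigma> y / a)) differentiable (at x)"
    and "pd (\<lambda>y. exp (\<sigma> y / a)) x i = exp (\<sigma> x / a) * pd \<sigma> x i / a"
proof -
  have "((\<lambda>y. exp (\<sigma> y / a)) has_derivative (\<lambda>v. exp (\<sigma> x / a) * ((\<Sum>i\<in>UNIV. v $ i * pd \<sigma> x i) / a))) (at x)"
    using assms(2) by (auto intro!: derivative_eq_intros has_derivative_pd[OF assms(1)] simp: algebra_simps)
  then show "(\<lambda>y. exp (\<sigma> y / a)) differentiable (at x)"
    and "pd (\<lambda>y. exp (\<sigma> y / a)) x i = exp (\<sigma> x / a) * pd \<sigma> x i / a"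
    by (auto simp: differentiable_def intro: pd_eqI)
qed

lemma reparametrised_curve:
  fixes s p :: "real \<Rightarrow> real^'n" and f :: "real^'n \<Rightarrow> real"
  assumes \<theta>: "(\<theta> has_real_derivative f (s (\<theta> \<tau>))) (at \<tau>)"
    and s: "(s has_vector_derivative v) (at (\<theta> \<tau>))"
    and p: "(p has_vector_derivative w) (at (\<theta> \<tau>))"
    and f: "f differentiable (at (s (\<theta> \<tau>)))" and f0: "f (s (\<theta> \<tau>)) \<noteq> 0"
  shows "((\<lambda>t. s (\<theta> t)) has_vector_derivative f (s (\<theta> \<tau>)) *\<^sub>R v) (at \<tau>)"
    and "((\<lambda>t. (1 / f (s (\<theta> t))) *\<^sub>R p (\<theta> t)) has_vector_derivative
          w - ((\<Sum>l\<in>UNIV. v $ l * pd f (s (\<theta> \<tau>)) l) / f (s (\<theta> \<tau>))) *\<^sub>R p (\<theta> \<tau>)) (at \<tau>)"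
proof -
  let ?x = "s (\<theta> \<tau>)"
  let ?df = "\<Sum>l\<in>UNIV. v $ l * pd f ?x l"
  have \<theta>': "(\<theta> has_vector_derivative f ?x) (at \<tau>)"
    using \<theta> by (simp add: has_real_derivative_iff_has_vector_derivative)
  show dS: "((\<lambda>t. s (\<theta> t)) has_vector_derivative f ?x *\<^sub>R v) (at \<tau>)"
    using vector_diff_chain_at[OF \<theta>' s] by (simp add: o_def)
  have dP: "((\<lambda>t. p (\<theta> t)) has_vector_derivative f ?x *\<^sub>R w) (at \<tau>)"
    using vector_diff_chain_at[OF \<theta>' p] by (simp add: o_def)
  have "((\<lambda>t. f (s (\<theta> t))) has_real_derivative f ?x * ?df) (at \<tau>)"
    using has_derivative_compose[OF dS[unfolded has_vector_derivative_def] has_derivative_pd[OF f]]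
    by (rule has_derivative_imp_has_field_derivative) (simp add: sum_distrib_left mult_ac)
  then have "((\<lambda>t. 1 / f (s (\<theta> t))) has_real_derivative - ?df / f ?x) (at \<tau>)"
    using f0 by (auto intro!: derivative_eq_intros simp: power2_eq_square)
  from has_vector_derivative_scaleR[OF this dP]
  show "((\<lambda>t. (1 / f (s (\<theta> t))) *\<^sub>R p (\<theta> t)) has_vector_derivative
      w - (?df / f ?x) *\<^sub>R p (\<theta> \<tau>)) (at \<tau>)"
    using f0 by simp
qed

locale measure_preserving_chaplygin =
  fixes \<Omega> :: "(real^'r) set"
    and K :: "real^'r \<Rightarrow> real^'r^'r"
    and U \<sigma> :: "real^'r \<Rightarrow> real"
    and C :: "real^'r \<Rightarrow> 'r \<Rightarrow> 'r \<Rightarrow> 'r \<Rightarrow> real"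
  assumes r2: "CARD('r) \<ge> 2"
    and open_\<Omega>: "open \<Omega>"
    and K_smooth: "\<And>i j. smooth_on \<Omega> (\<lambda>x. K x $ i $ j)"
    and K_sym: "\<And>x. x \<in> \<Omega> \<Longrightarrow> transpose (K x) = K x"
    and K_posdef: "\<And>x v. x \<in> \<Omega> \<Longrightarrow> v \<noteq> 0 \<Longrightarrow> v \<bullet> (K x *v v) > 0"
    and U_smooth: "smooth_on \<Omega> U"
    and C_antisym: "\<And>x i j k. x \<in> \<Omega> \<Longrightarrow> C x i j k = - C x j i k"
    and \<sigma>_smooth: "smooth_on \<Omega> \<sigma>"
    and measure: "preserves_measure \<Omega> (redH K U) C \<sigma>"
    and hyp_H: "hypH \<Omega> C"
begin

definition multiplier :: "real^'r \<Rightarrow> real" where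
  "multiplier x = exp (\<sigma> x / (1 - real CARD('r)))"

definition gyroscopic_diagonal :: "real^'r \<Rightarrow> real^'r" where
  "gyroscopic_diagonal x = (\<chi> j. pd \<sigma> x j / (1 - real CARD('r)))"

lemma invertible_K: "x \<in> \<Omega> \<Longrightarrow> invertible (K x)"
  using K_posdef by (rule invertible_if_pos_def)

lemma symmetric_inv_K: "x \<in> \<Omega> \<Longrightarrow> transpose (matrix_inv (K x)) = matrix_inv (K x)"
  using invertible_K K_sym by (rule symmetric_matrix_inv)

lemma differentiable_inv_K:
  "x \<in> \<Omega> \<Longrightarrow> (\<lambda>y. matrix_inv (K y) $ j $ k) differentiable (at x)"
  using open_\<Omega> _ invertible_K smooth_on_imp_differentiable[OF K_smooth]
  by (rule differentiable_matrix_inv_entry)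

lemma gyroscopic_diagonal_eq:
  assumes "x \<in> \<Omega>" "m \<noteq> j"
  shows "C x j m m = gyroscopic_diagonal x $ j"
proof -
  have diag: "C x i k k = C x i l l" if "k \<noteq> i" "l \<noteq> i" for i k l
    using hyp_H assms(1) that unfolding hypH_def by blast
  have "pd \<sigma> x j = (\<Sum>i\<in>UNIV. C x i j i)"
    using measure open_\<Omega> assms(1) symmetric_inv_K invertible_K[OF assms(1)]
      differentiable_inv_K[OF assms(1)] smooth_on_imp_differentiable[OF U_smooth assms(1)]
      smooth_on_imp_differentiable[OF \<sigma>_smooth assms(1)] C_antisym[OF assms(1)]
    by (rule preserves_measure_gradient)
  also have "\<dots> = (1 - real CARD('r)) * C x j m m"
    using hypH_trace[of "C x", OF C_antisym[OF assms(1)] diag \<open>m \<noteq> j\<close>] .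
  finally show ?thesis
    using r2 by (simp add: gyroscopic_diagonal_def)
qed

lemma reduced_field:
  assumes "x \<in> \<Omega>"
  shows "redXs (redH K U) x p = matrix_inv (K x) *v p"
    and "redXp (redH K U) C x p = (\<chi> i. - dHds (redH K U) x p i
      - (gyroscopic_diagonal x $ i * (p \<bullet> (matrix_inv (K x) *v p))
         - p $ i * (gyroscopic_diagonal x \<bullet> (matrix_inv (K x) *v p))))"
proof -
  have distinct: "C x i j k = 0" if "i \<noteq> j" "j \<noteq> k" "i \<noteq> k" for i j k
    using hyp_H assms that unfolding hypH_def by blast
  show "redXp (redH K U) C x p = (\<chi> i. - dHds (redH K U) x p i
      - (gyroscopic_diagonal x $ i * (p \<bullet> (matrix_inv (K x) *v p))
         - p $ i * (gyroscopic_diagonal x \<bullet> (matrix_inv (K x) *v p))))"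
    by (rule redXp_redH_gyroscopic[where K=K and x=x and C=C, OF symmetric_inv_K[OF assms]
        C_antisym[OF assms] distinct gyroscopic_diagonal_eq[OF assms]])
  show "redXs (redH K U) x p = matrix_inv (K x) *v p"
    by (simp add: redXs_def dHdp_redH[where K=K and x=x, OF symmetric_inv_K[OF assms]] vec_eq_iff)
qed

lemma multiplier_nonzero: "multiplier x \<noteq> 0"
  by (simp add: multiplier_def)

lemma multiplier_derivative:
  assumes "x \<in> \<Omega>"
  shows differentiable_multiplier: "multiplier differentiable (at x)"
    and pd_multiplier: "pd multiplier x l = multiplier x * gyroscopic_diagonal x $ l"
proof -
  have "1 - real CARD('r) \<noteq> 0"
    using r2 by simp
  note exp_scaled_derivative[OF smooth_on_imp_differentiable[OF \<sigma>_smooth assms] this]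
  then show "multiplier differentiable (at x)"
    and "pd multiplier x l = multiplier x * gyroscopic_diagonal x $ l"
    unfolding multiplier_def[abs_def] gyroscopic_diagonal_def by simp_all
qed

lemma reparametrised_equations:
  assumes x: "s (\<theta> \<tau>) \<in> \<Omega>"
    and d\<theta>: "(\<theta> has_real_derivative multiplier (s (\<theta> \<tau>))) (at \<tau>)"
    and ds: "(s has_vector_derivative redXs (redH K U) (s (\<theta> \<tau>)) (p (\<theta> \<tau>))) (at (\<theta> \<tau>))"
    and dp: "(p has_vector_derivative redXp (redH K U) C (s (\<theta> \<tau>)) (p (\<theta> \<tau>))) (at (\<theta> \<tau>))"
  defines "Ht \<equiv> \<lambda>x q. redH K U x (multiplier x *\<^sub>R q)"
    and "Pt \<equiv> \<lambda>t. (1 / multiplier (s (\<theta> t))) *\<^sub>R p (\<theta> t)"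
  shows "((\<lambda>t. s (\<theta> t)) has_vector_derivative (\<chi> i. dHdp Ht (s (\<theta> \<tau>)) (Pt \<tau>) i)) (at \<tau>)"
    and "(Pt has_vector_derivative (\<chi> i. - dHds Ht (s (\<theta> \<tau>)) (Pt \<tau>) i)) (at \<tau>)"
proof -
  let ?x = "s (\<theta> \<tau>)" and ?P = "p (\<theta> \<tau>)"
  let ?v = "matrix_inv (K ?x) *v ?P" and ?c = "gyroscopic_diagonal ?x"
  note curve = reparametrised_curve[OF d\<theta> ds[unfolded reduced_field(1)[OF x]]
      dp[unfolded reduced_field(2)[OF x]] differentiable_multiplier[OF x] multiplier_nonzero]
  have "(\<Sum>l\<in>UNIV. ?v $ l * pd multiplier ?x l) / multiplier ?x = ?c \<bullet> ?v"
    unfolding inner_vec_def sum_divide_distrib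
    by (intro sum.cong refl) (simp add: pd_multiplier[OF x] multiplier_nonzero)
  moreover have "(\<chi> i. dHdp Ht ?x (Pt \<tau>) i) = multiplier ?x *\<^sub>R ?v"
    using dHdp_redH_rescaled[where K=K and x="?x" and e=multiplier, OF symmetric_inv_K[OF x] multiplier_nonzero]
    by (simp add: Ht_def Pt_def vec_eq_iff)
  moreover have "(\<chi> i. - dHds Ht ?x (Pt \<tau>) i)
      = (\<chi> i. - dHds (redH K U) ?x ?P i - (?c $ i * (?P \<bullet> ?v) - ?P $ i * (?c \<bullet> ?v))) - (?c \<bullet> ?v) *\<^sub>R ?P"
    using dHds_redH_rescaled[OF differentiable_inv_K[OF x] smooth_on_imp_differentiable[OF U_smooth x]
        differentiable_multiplier[OF x] multiplier_nonzero] pd_multiplier[OF x] multiplier_nonzero[of ?x]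
    by (simp add: Ht_def Pt_def vec_eq_iff algebra_simps)
  ultimately show "((\<lambda>t. s (\<theta> t)) has_vector_derivative (\<chi> i. dHdp Ht ?x (Pt \<tau>) i)) (at \<tau>)"
    and "(Pt has_vector_derivative (\<chi> i. - dHds Ht ?x (Pt \<tau>) i)) (at \<tau>)"
    using curve by (simp_all add: Pt_def)
qed

end

theorem mainTheorem1:
  fixes \<Omega> :: "(real^'r) set"
    and K :: "real^'r \<Rightarrow> real^'r^'r"
    and U \<sigma> :: "real^'r \<Rightarrow> real"
    and C :: "real^'r \<Rightarrow> 'r \<Rightarrow> 'r \<Rightarrow> 'r \<Rightarrow> real"
    and s p :: "real \<Rightarrow> real^'r"
    and J I :: "real set"
    and \<theta> :: "real \<Rightarrow> real"
  assumes r2: "CARD('r) \<ge> 2"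
    and open_\<Omega>: "open \<Omega>"
    and K_smooth: "\<And>i j. smooth_on \<Omega> (\<lambda>x. K x $ i $ j)"
    and K_sym: "\<And>x. x \<in> \<Omega> \<Longrightarrow> transpose (K x) = K x"
    and K_posdef: "\<And>x v. x \<in> \<Omega> \<Longrightarrow> v \<noteq> 0 \<Longrightarrow> v \<bullet> (K x *v v) > 0"
    and U_smooth: "smooth_on \<Omega> U"
    and C_smooth: "\<And>i j k. smooth_on \<Omega> (\<lambda>x. C x i j k)"
    and C_antisym: "\<And>x i j k. x \<in> \<Omega> \<Longrightarrow> C x i j k = - C x j i k"
    and \<sigma>_smooth: "smooth_on \<Omega> \<sigma>"
    and measure: "preserves_measure \<Omega> (redH K U) C \<sigma>"
    and hyp_H: "hypH \<Omega> C"
    and J_open: "open J"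
    and sol_in: "\<And>t. t \<in> J \<Longrightarrow> s t \<in> \<Omega>"
    and sol_s: "\<And>t. t \<in> J \<Longrightarrow> (s has_vector_derivative redXs (redH K U) (s t) (p t)) (at t)"
    and sol_p: "\<And>t. t \<in> J \<Longrightarrow> (p has_vector_derivative redXp (redH K U) C (s t) (p t)) (at t)"
    and I_open: "open I"
    and \<theta>_into: "\<theta> ` I \<subseteq> J"
    and \<theta>_deriv: "\<And>\<tau>. \<tau> \<in> I \<Longrightarrow>
          (\<theta> has_real_derivative exp (\<sigma> (s (\<theta> \<tau>)) / (1 - real CARD('r)))) (at \<tau>)"
  shows "\<forall>\<tau>\<in>I.
     (let f = (\<lambda>x. exp (\<sigma> x / (1 - real CARD('r))));
          Ht = (\<lambda>x q. redH K U x (f x *\<^sub>R q));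
          S = (\<lambda>\<tau>'. s (\<theta> \<tau>'));
          Pt = (\<lambda>\<tau>'. (1 / f (S \<tau>')) *\<^sub>R p (\<theta> \<tau>'))
      in (S has_vector_derivative (\<chi> i. dHdp Ht (S \<tau>) (Pt \<tau>) i)) (at \<tau>)
       \<and> (Pt has_vector_derivative (\<chi> i. - dHds Ht (S \<tau>) (Pt \<tau>) i)) (at \<tau>))"
proof -
  interpret measure_preserving_chaplygin \<Omega> K U \<sigma> C
    by unfold_locales
      (fact r2 open_\<Omega> K_smooth K_sym K_posdef U_smooth C_antisym \<sigma>_smooth measure hyp_H)+
  show ?thesis
    unfolding Let_def multiplier_def[symmetric]
    using reparametrised_equations[where s=s and p=p and \<theta>=\<theta>,
        OF sol_in \<theta>_deriv[folded multiplier_def] sol_s sol_p] \<theta>_into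
    by blast
qed

end
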